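(* Let $r\ge1$ and $s\ge2$. Let $P$ be the pattern of length $s(r+1)$ obtained by concatenating, for $i=1,2,\dots,s$ in order, the blocks $0^r\,i$ (i.e. $P=0^r\,1\,0^r\,2\,0^r\cdots 0^r\,(s-1)\,0^r\,s$), and let $P'$ be the pattern obtained by concatenating, for $i=1,\dots,s$ in order, the blocks $(i-1)^r\,i$ (i.e. $P'=0^r\,1\,1^r\,2\,2^r\cdots(s-1)^r\,s$), where $a^r$ denotes $r$ copies of $a$. Then the consecutive patterns $P$ and $P'$ are super-strongly Wilf equivalent.
   Context: An inversion sequence of length $n$ is an integer sequence $e=e_1e_2\dots e_n$ with $0\le e_i<i$ for all $i$; $\mathbf{I}_n$ denotes the set of these. The reduction of an integer word $w$ is obtained by replacing every occurrence of the $i$-th smallest distinct value of $w$ by $i-1$. For a pattern $p$ of length $m$, $\mathrm{Em}(p,e)$ is the set of positions $i$ such that the reduction of $e_i\dots e_{i+m-1}$ equals $p$. Two patterns are super-strongly Wilf equivalent if $|\{e\in\mathbf{I}_n:\mathrm{Em}(p,e)=T\}|=|\{e\in\mathbf{I}_n:\mathrm{Em}(p',e)=T\}|$ for all $n$ and all $T\subseteq[n]$. *)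

theory Defs
  imports Main
begin

text \<open>Inversion sequences of length n, as lists; entry at 1-based position i
  is xs ! (i-1) and must satisfy 0 \<le> e_i < i.\<close>
definition inv_seqs :: "nat \<Rightarrow> nat list set" where
  "inv_seqs n = {e. length e = n \<and> (\<forall>j<n. e ! j < Suc j)}"

definition reduct :: "nat list \<Rightarrow> nat list" where
  "reduct w = map (\<lambda>v. card {u \<in> set w. u < v}) w"

definition Em :: "nat list \<Rightarrow> nat list \<Rightarrow> nat set" where
  "Em p e = {i. 1 \<le> i \<and> i + length p \<le> length e + 1 \<and>
               reduct (take (length p) (drop (i - 1) e)) = p}"

definition super_strongly_wilf_equiv :: "nat list \<Rightarrow> nat list \<Rightarrow> bool" where
  "super_strongly_wilf_equiv p p' \<longleftrightarrow>
     (\<forall>n T. T \<subseteq> {1..n} \<longrightarrow>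
        card {e \<in> inv_seqs n. Em p e = T} = card {e \<in> inv_seqs n. Em p' e = T})"

end

theory Submission
  imports Defs
begin

(*
  Both patterns consist of s blocks of length r + 1 whose last entries, the peaks 1, ..., s,
  increase; the other r entries of a block are 0 in P, while in P' they equal the previous
  peak (0 in the first block).
  Two occurrences of either pattern overlap only in whole blocks or in a single entry, so for
  a set T of occurrence positions the non-peak entries outside the first block of each
  occurrence never meet a peak. With P-occurrences at T these entries repeat the entry r + 1
  places to their left; with P'-occurrences they repeat the entry just before them.
  Overwriting them from left to right by the entry one place, resp. r + 1 places, to the left
  turns P-occurrences at T into P'-occurrences and back. This keeps inversion sequences, since
  values only move to the right, and it is injective, since the overwritten entries are
  recovered from the remaining ones. Hence for every T the inversion sequences whose
  occurrence set contains T are equinumerous for P and P', and Moebius inversion over the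
  subsets of {1..n} gives the same for occurrence set exactly T.
*)

definition occurs_at :: "(nat \<Rightarrow> nat) \<Rightarrow> nat \<Rightarrow> (nat \<Rightarrow> nat) \<Rightarrow> nat \<Rightarrow> bool" where
  "occurs_at p m w i \<longleftrightarrow> (\<forall>a<m. \<forall>b<m. w (i + a) < w (i + b) \<longleftrightarrow> p a < p b)"

lemma card_image_eq_if_same_kernel:
  assumes "\<And>j k. j \<in> J \<Longrightarrow> k \<in> J \<Longrightarrow> f j = f k \<longleftrightarrow> g j = g k"
  shows "card (f ` J) = card (g ` J)"
proof -
  let ?P = "(\<lambda>j. (f j, g j)) ` J"
  have "inj_on fst ?P" "inj_on snd ?P"
    using assms by (auto simp: inj_on_def)
  then have "card (fst ` ?P) = card (snd ` ?P)"
    by (simp add: card_image)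
  then show ?thesis
    by (simp add: image_image)
qed

lemma card_less_card_less_iff:
  fixes A :: "'a::linorder set"
  assumes "finite A" "x \<in> A" "y \<in> A"
  shows "card {u \<in> A. u < x} < card {u \<in> A. u < y} \<longleftrightarrow> x < y"
proof
  assume "x < y"
  with assms(2) have "{u \<in> A. u < x} \<subset> {u \<in> A. u < y}"
    by auto
  with assms(1) show "card {u \<in> A. u < x} < card {u \<in> A. u < y}"
    by (simp add: psubset_card_mono)
next
  assume less: "card {u \<in> A. u < x} < card {u \<in> A. u < y}"
  show "x < y"
  proof (rule ccontr)
    assume "\<not> x < y"
    then have "{u \<in> A. u < y} \<subseteq> {u \<in> A. u < x}"
      by auto
    with assms(1) have "card {u \<in> A. u < y} \<le> card {u \<in> A. u < x}"
      by (simp add: card_mono)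
    with less show False
      by simp
  qed
qed

lemma reduct_eq_map_iff:
  assumes len: "length w = m" and img: "pf ` {..<m} = {..<K}"
  shows "reduct w = map pf [0..<m] \<longleftrightarrow> (\<forall>a<m. \<forall>b<m. w ! a < w ! b \<longleftrightarrow> pf a < pf b)"
proof
  assume red: "reduct w = map pf [0..<m]"
  have rank: "pf a = card {u \<in> set w. u < w ! a}" if "a < m" for a
    using arg_cong[OF red, of "\<lambda>xs. xs ! a"] that len by (simp add: reduct_def)
  show "\<forall>a<m. \<forall>b<m. w ! a < w ! b \<longleftrightarrow> pf a < pf b"
  proof (intro allI impI)
    fix a b assume "a < m" "b < m"
    then show "w ! a < w ! b \<longleftrightarrow> pf a < pf b"
      using rank card_less_card_less_iff[of "set w" "w ! a" "w ! b"] len by simp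
  qed
next
  assume iso: "\<forall>a<m. \<forall>b<m. w ! a < w ! b \<longleftrightarrow> pf a < pf b"
  have "card {u \<in> set w. u < w ! a} = pf a" if a: "a < m" for a
  proof -
    let ?J = "{j. j < m \<and> pf j < pf a}"
    have smaller: "{u \<in> set w. u < w ! a} = (!) w ` ?J"
      using iso a len by (auto simp: in_set_conv_nth)
    have "pf a < K"
      using img a by auto
    moreover have "pf ` ?J = {v \<in> pf ` {..<m}. v < pf a}"
      by auto
    ultimately have ranks: "pf ` ?J = {..<pf a}"
      using img by auto
    have "(!) w j = (!) w k \<longleftrightarrow> pf j = pf k" if "j \<in> ?J" "k \<in> ?J" for j k
      using iso that by (metis linorder_neqE_nat mem_Collect_eq not_less_iff_gr_or_eq)
    then show ?thesis
      unfolding smaller using card_image_eq_if_same_kernel[of ?J "(!) w" pf] ranks by simp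
  qed
  then show "reduct w = map pf [0..<m]"
    using len by (intro nth_equalityI) (simp_all add: reduct_def)
qed

lemma mem_Em_map_iff:
  assumes "pf ` {..<m} = {..<K}"
  shows "i \<in> Em (map pf [0..<m]) e \<longleftrightarrow>
           1 \<le> i \<and> i - 1 + m \<le> length e \<and> occurs_at pf m ((!) e) (i - 1)"
proof -
  have "reduct (take m (drop (i - 1) e)) = map pf [0..<m] \<longleftrightarrow> occurs_at pf m ((!) e) (i - 1)"
    if "i - 1 + m \<le> length e"
    using reduct_eq_map_iff[of "take m (drop (i - 1) e)" m pf K] that assms
    by (simp add: occurs_at_def)
  then show ?thesis
    unfolding Em_def by auto
qed

lemma Em_subset:
  assumes "0 < length p"
  shows "Em p e \<subseteq> {1..length e}"
proof
  fix i assume "i \<in> Em p e"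
  then have "1 \<le> i" "i + length p \<le> length e + 1"
    by (simp_all add: Em_def)
  moreover from this have "i \<le> length e"
    using assms by linarith
  ultimately show "i \<in> {1..length e}"
    by simp
qed

lemma occurs_at_less:
  "occurs_at p m w i \<Longrightarrow> a < m \<Longrightarrow> b < m \<Longrightarrow> p a < p b \<Longrightarrow> w (i + a) < w (i + b)"
  unfolding occurs_at_def by blast

lemma occurs_at_le:
  assumes "occurs_at p m w i" "a < m" "b < m" "p a \<le> p b"
  shows "w (i + a) \<le> w (i + b)"
proof -
  have "\<not> w (i + b) < w (i + a)"
    using assms unfolding occurs_at_def by auto
  then show ?thesis
    by simp
qed

lemma occurs_at_eq:
  "occurs_at p m w i \<Longrightarrow> a < m \<Longrightarrow> b < m \<Longrightarrow> p a = p b \<Longrightarrow> w (i + a) = w (i + b)"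
  using occurs_at_le[of p m w i a b] occurs_at_le[of p m w i b a] by simp

lemma occurs_at_cong:
  "occurs_at p m w i \<Longrightarrow> (\<And>a. a < m \<Longrightarrow> w' (i + a) = w (i + a)) \<Longrightarrow> occurs_at p m w' i"
  unfolding occurs_at_def by simp

lemma occurs_at_overlap:
  assumes "occurs_at p m w i" "occurs_at p m w (i + d)" "d + a < m" "d + b < m"
  shows "p (d + a) < p (d + b) \<longleftrightarrow> p a < p b"
proof -
  have "w (i + (d + a)) < w (i + (d + b)) \<longleftrightarrow> p (d + a) < p (d + b)"
    using assms(1,3,4) unfolding occurs_at_def by blast
  moreover have "w (i + d + a) < w (i + d + b) \<longleftrightarrow> p a < p b"
    using assms(2,3,4) unfolding occurs_at_def by simp
  ultimately show ?thesis
    by (simp add: add.assoc)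
qed

lemma occurs_at_if_levels:
  assumes "\<And>a. a < m \<Longrightarrow> w (i + a) = lvl (p a)" "\<And>a. a < m \<Longrightarrow> p a \<le> S"
    and "strict_mono_on {..S} lvl"
  shows "occurs_at p m w i"
  unfolding occurs_at_def
proof (intro allI impI)
  fix a b assume "a < m" "b < m"
  then show "w (i + a) < w (i + b) \<longleftrightarrow> p a < p b"
    using assms(1,2) strict_mono_on_less[OF assms(3), of "p a" "p b"] by simp
qed

section \<open>Moebius inversion over subsets\<close>

lemma card_supset_split:
  assumes "finite X" "finite U" "\<And>e. e \<in> X \<Longrightarrow> E e \<subseteq> U" "T \<subseteq> U"
  shows "card {e \<in> X. T \<subseteq> E e} =
           card {e \<in> X. E e = T} + (\<Sum>V | T \<subset> V \<and> V \<subseteq> U. card {e \<in> X. E e = V})"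
proof -
  have fin: "finite {V. T \<subseteq> V \<and> V \<subseteq> U}"
    using assms(2) by (rule finite_subset[rotated, OF finite_Pow_iff[THEN iffD2]]) auto
  have "{e \<in> X. T \<subseteq> E e} = (\<Union>V \<in> {V. T \<subseteq> V \<and> V \<subseteq> U}. {e \<in> X. E e = V})"
    using assms(3) by auto
  also have "card \<dots> = (\<Sum>V | T \<subseteq> V \<and> V \<subseteq> U. card {e \<in> X. E e = V})"
    using fin assms(1) by (intro card_UN_disjoint) auto
  also have "{V. T \<subseteq> V \<and> V \<subseteq> U} = insert T {V. T \<subset> V \<and> V \<subseteq> U}"
    using assms(4) by auto
  finally show ?thesis
    using fin by (subst (asm) sum.insert) (auto intro: finite_subset[OF _ fin])
qed

lemma card_fibres_eq_if_card_supsets_eq: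
  assumes "finite X" "finite U"
    and "\<And>e. e \<in> X \<Longrightarrow> E1 e \<subseteq> U" "\<And>e. e \<in> X \<Longrightarrow> E2 e \<subseteq> U"
    and supsets_eq: "\<And>T. T \<subseteq> U \<Longrightarrow> card {e \<in> X. T \<subseteq> E1 e} = card {e \<in> X. T \<subseteq> E2 e}"
  shows "T \<subseteq> U \<Longrightarrow> card {e \<in> X. E1 e = T} = card {e \<in> X. E2 e = T}"
proof (induction "card (U - T)" arbitrary: T rule: less_induct)
  case less
  have "card {e \<in> X. E1 e = V} = card {e \<in> X. E2 e = V}" if "T \<subset> V" "V \<subseteq> U" for V
  proof -
    have "card (U - V) < card (U - T)"
      using that assms(2) by (intro psubset_card_mono) auto
    then show ?thesis
      using less that(2) by blast
  qed
  then have "(\<Sum>V | T \<subset> V \<and> V \<subseteq> U. card {e \<in> X. E1 e = V}) =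
             (\<Sum>V | T \<subset> V \<and> V \<subseteq> U. card {e \<in> X. E2 e = V})"
    by (intro sum.cong) auto
  then show ?case
    using card_supset_split[OF assms(1,2,3) less.prems] card_supset_split[OF assms(1,2,4) less.prems]
      supsets_eq[OF less.prems]
    by simp
qed

section \<open>Copying entries within inversion sequences\<close>

lemma finite_inv_seqs: "finite (inv_seqs n)"
proof (rule finite_subset)
  show "inv_seqs n \<subseteq> {xs. set xs \<subseteq> {..<n} \<and> length xs = n}"
    by (force simp: inv_seqs_def in_set_conv_nth)
qed (rule finite_lists_length_eq[OF finite_lessThan])

lemma map_in_inv_seqs:
  assumes "xs \<in> inv_seqs n" and "\<And>j. \<exists>j'\<le>j. f j = xs ! j'"
  shows "map f [0..<n] \<in> inv_seqs n"
  unfolding inv_seqs_def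
proof (intro CollectI conjI allI impI)
  fix j assume "j < n"
  moreover obtain j' where "j' \<le> j" "f j = xs ! j'"
    using assms(2) by blast
  moreover have "xs ! j' < Suc j'"
    using assms(1) \<open>j' \<le> j\<close> \<open>j < n\<close> by (simp add: inv_seqs_def)
  ultimately show "map f [0..<n] ! j < Suc j"
    by simp
qed simp

function copy_back :: "nat \<Rightarrow> nat set \<Rightarrow> (nat \<Rightarrow> 'a) \<Rightarrow> nat \<Rightarrow> 'a" where
  "copy_back d M e p = (if p \<in> M \<and> 0 < d \<and> d \<le> p then copy_back d M e (p - d) else e p)"
  by auto
termination by (relation "measure (\<lambda>(d, M, e, p). p)") auto

declare copy_back.simps [simp del]

lemma copy_back_stop: "\<not> (p \<in> M \<and> 0 < d \<and> d \<le> p) \<Longrightarrow> copy_back d M e p = e p"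
  by (simp only: copy_back.simps[of d M e p] if_not_P if_False)

lemma copy_back_notin: "p \<notin> M \<Longrightarrow> copy_back d M e p = e p"
  by (simp add: copy_back_stop)

lemma copy_back_in: "p \<in> M \<Longrightarrow> 0 < d \<Longrightarrow> d \<le> p \<Longrightarrow> copy_back d M e p = copy_back d M e (p - d)"
  by (subst copy_back.simps) simp

lemma copy_back_source: "\<exists>p'\<le>p. copy_back d M e p = e p'"
proof (induction p rule: less_induct)
  case (less p)
  show ?case
  proof (cases "p \<in> M \<and> 0 < d \<and> d \<le> p")
    case True
    then have "p - d < p"
      by simp
    then obtain p' where "p' \<le> p - d" "copy_back d M e (p - d) = e p'"
      using less by blast
    then show ?thesis
      using True copy_back_in[of p M d e] by (metis diff_le_self le_trans)
  qed (auto simp: copy_back_stop)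
qed

lemma copy_back_eq_self:
  assumes "\<And>q. q \<le> p \<Longrightarrow> q \<in> M \<Longrightarrow> d \<le> q \<Longrightarrow> e q = e (q - d)"
  shows "copy_back d M e p = e p"
  using assms
proof (induction p rule: less_induct)
  case (less p)
  show ?case
  proof (cases "p \<in> M \<and> 0 < d \<and> d \<le> p")
    case True
    then have "copy_back d M e p = e (p - d)"
      using less by (simp add: copy_back_in)
    also have "\<dots> = e p"
      using less.prems True by (metis order_refl)
    finally show ?thesis .
  qed (rule copy_back_stop)
qed

lemma copy_back_cong:
  assumes "\<And>q. q \<le> p \<Longrightarrow> \<not> (q \<in> M \<and> 0 < d \<and> d \<le> q) \<Longrightarrow> e1 q = e2 q"
  shows "copy_back d M e1 p = copy_back d M e2 p"
  using assms
proof (induction p rule: less_induct)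
  case (less p)
  show ?case
  proof (cases "p \<in> M \<and> 0 < d \<and> d \<le> p")
    case True
    then show ?thesis
      using less by (simp add: copy_back_in)
  next
    case False
    then show ?thesis
      using less.prems by (simp add: copy_back_stop)
  qed
qed

definition occurrence_class :: "(nat \<Rightarrow> nat) \<Rightarrow> nat \<Rightarrow> nat \<Rightarrow> nat set \<Rightarrow> nat list set" where
  "occurrence_class p m n T =
     {e \<in> inv_seqs n. \<forall>i\<in>T. i + m \<le> n \<and> occurs_at p m ((!) e) i}"

lemma Em_supset_eq_occurrence_class:
  assumes "pf ` {..<m} = {..<K}" and "0 \<notin> T"
  shows "{e \<in> inv_seqs n. T \<subseteq> Em (map pf [0..<m]) e} = occurrence_class pf m n ((\<lambda>i. i - 1) ` T)"
  unfolding occurrence_class_def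
proof (intro Collect_cong conj_cong refl)
  fix e assume "e \<in> inv_seqs n"
  then have "length e = n"
    by (simp add: inv_seqs_def)
  moreover have "1 \<le> i" if "i \<in> T" for i
    using assms(2) that by (cases i) auto
  ultimately show "T \<subseteq> Em (map pf [0..<m]) e \<longleftrightarrow>
      (\<forall>i\<in>(\<lambda>i. i - 1) ` T. i + m \<le> n \<and> occurs_at pf m ((!) e) i)"
    using mem_Em_map_iff[OF assms(1)] by auto
qed

lemma map_in_occurrence_class:
  assumes "x \<in> inv_seqs n" and "\<And>i. i \<in> T \<Longrightarrow> i + m \<le> n"
    and "\<And>i. i \<in> T \<Longrightarrow> occurs_at p m f i" and "\<And>j. \<exists>j'\<le>j. f j = x ! j'"
  shows "map f [0..<n] \<in> occurrence_class p m n T"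
  unfolding occurrence_class_def
proof (intro CollectI conjI ballI)
  show "map f [0..<n] \<in> inv_seqs n"
    using map_in_inv_seqs[OF assms(1,4)] .
  fix i assume "i \<in> T"
  then show "i + m \<le> n"
    by (rule assms(2))
  show "occurs_at p m ((!) (map f [0..<n])) i"
    by (rule occurs_at_cong[OF assms(3)[OF \<open>i \<in> T\<close>]]) (use assms(2)[OF \<open>i \<in> T\<close>] in simp)
qed

lemma card_le_card_if_copy_back_maps:
  assumes "finite Y" and X: "X \<subseteq> inv_seqs n"
    and "0 < d'" and M: "\<And>q. q \<in> M \<Longrightarrow> d' \<le> q"
    and periodic: "\<And>x q. x \<in> X \<Longrightarrow> q < n \<Longrightarrow> q \<in> M \<Longrightarrow> x ! q = x ! (q - d')"
    and maps: "\<And>x. x \<in> X \<Longrightarrow> map (copy_back d M ((!) x)) [0..<n] \<in> Y"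
  shows "card X \<le> card Y"
proof -
  let ?F = "\<lambda>x. map (copy_back d M ((!) x)) [0..<n]"
  have "inj_on ?F X"
  proof
    fix x y assume x: "x \<in> X" and y: "y \<in> X" and eq: "?F x = ?F y"
    have outside: "x ! q = y ! q" if "q < n" "q \<notin> M" for q
      using arg_cong[OF eq, of "\<lambda>xs. xs ! q"] that by (simp add: copy_back_notin)
    have "x ! p = y ! p" if "p < n" for p
    proof -
      have "x ! p = copy_back d' M ((!) x) p"
        using periodic[OF x] that by (intro copy_back_eq_self[symmetric]) auto
      also have "\<dots> = copy_back d' M ((!) y) p"
        using outside that \<open>0 < d'\<close> M by (intro copy_back_cong) auto
      also have "\<dots> = y ! p"
        using periodic[OF y] that by (intro copy_back_eq_self) auto
      finally show ?thesis .
    qed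
    moreover have "length x = n" "length y = n"
      using x y X by (auto simp: inv_seqs_def)
    ultimately show "x = y"
      by (simp add: nth_equalityI)
  qed
  then show ?thesis
    using card_inj_on_le[of ?F X Y] maps assms(1) by blast
qed

lemma concat_blocks_eq_map:
  assumes "\<And>i. i < k \<Longrightarrow> length (b i) = R"
    and "\<And>i c. i < k \<Longrightarrow> c < R \<Longrightarrow> b i ! c = p (i * R + c)"
  shows "concat (map b [0..<k]) = map p [0..<k * R]"
  using assms
proof (induction k)
  case (Suc k)
  have "map p [k * R..<k * R + R] = b k"
    using Suc.prems by (intro nth_equalityI) auto
  moreover have "[0..<Suc k * R] = [0..<k * R] @ [k * R..<k * R + R]"
    using upt_add_eq_append[of 0 "k * R" R] by (simp add: add.commute)
  ultimately show ?case
    using Suc by simp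
qed simp

(* Position a = K * (r + 1) + c with c < r + 1 lies in block K; offset c = r is its peak. *)
definition spike_pattern :: "nat \<Rightarrow> nat \<Rightarrow> nat" where
  "spike_pattern r a = (if a mod Suc r = r then a div Suc r + 1 else 0)"

definition stair_pattern :: "nat \<Rightarrow> nat \<Rightarrow> nat" where
  "stair_pattern r a = (if a mod Suc r = r then a div Suc r + 1 else a div Suc r)"

lemma spike_pattern_block:
  assumes "a = K * Suc r + c" "c < Suc r"
  shows "spike_pattern r a = (if c = r then K + 1 else 0)"
  using assms by (simp add: spike_pattern_def del: mult_Suc_right)

lemma stair_pattern_block:
  assumes "a = K * Suc r + c" "c < Suc r"
  shows "stair_pattern r a = (if c = r then K + 1 else K)"
  using assms by (simp add: stair_pattern_def del: mult_Suc_right)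

lemma spike_pattern_list:
  "concat (map (\<lambda>i. replicate r 0 @ [i]) [1..<k + 1]) = map (spike_pattern r) [0..<k * Suc r]"
proof -
  have upt: "[1..<k + 1] = map Suc [0..<k]"
    by (simp add: map_Suc_upt)
  show ?thesis
    unfolding upt map_map comp_def diff_Suc_1
    by (intro concat_blocks_eq_map)
      (auto simp: spike_pattern_block[OF refl] nth_append simp del: mult_Suc_right)
qed

lemma stair_pattern_list:
  "concat (map (\<lambda>i. replicate r (i - 1) @ [i]) [1..<k + 1]) = map (stair_pattern r) [0..<k * Suc r]"
proof -
  have upt: "[1..<k + 1] = map Suc [0..<k]"
    by (simp add: map_Suc_upt)
  show ?thesis
    unfolding upt map_map comp_def diff_Suc_1
    by (intro concat_blocks_eq_map)
      (auto simp: stair_pattern_block[OF refl] nth_append simp del: mult_Suc_right)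
qed

lemma peak_position: "a mod Suc r = r \<Longrightarrow> (a div Suc r + 1) * Suc r - 1 = a"
  by (metis add_Suc_right add_diff_cancel_left' div_mult_mod_eq mult_Suc plus_1_eq_Suc add.commute)

lemma image_lessThan_eq_if_onto:
  assumes "\<And>a. a < m \<Longrightarrow> p a \<le> s" and "0 < m" "p 0 = 0"
    and "\<And>j. 1 \<le> j \<Longrightarrow> j \<le> s \<Longrightarrow> \<exists>a<m. p a = j"
  shows "p ` {..<m} = {..<Suc s}"
proof
  show "{..<Suc s} \<subseteq> p ` {..<m}"
  proof
    fix j assume "j \<in> {..<Suc s}"
    show "j \<in> p ` {..<m}"
    proof (cases "j = 0")
      case True
      then show ?thesis
        using assms(2,3) by force
    next
      case False
      then obtain a where "a < m" "p a = j"
        using assms(4)[of j] \<open>j \<in> {..<Suc s}\<close> by auto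
      then show ?thesis
        by blast
    qed
  qed
qed (use assms(1) in \<open>auto simp: less_Suc_eq_le\<close>)

lemma mod_add_dvd_left: "(n :: nat) dvd d \<Longrightarrow> (d + a) mod n = a mod n"
  by (elim dvdE) simp

locale spike_stair =
  fixes r s :: nat
  assumes r_pos: "1 \<le> r" and s_ge_2: "2 \<le> s"
begin

abbreviation "R \<equiv> Suc r"
abbreviation "m \<equiv> s * Suc r"
abbreviation "P \<equiv> spike_pattern r"
abbreviation "Q \<equiv> stair_pattern r"

(* keeps k * R folded; otherwise simp rewrites it to k + k * r *)
declare mult_Suc_right [simp del]

lemma block_decomposition:
  obtains K t where "d = K * R + t" "t < R"
  using div_mult_mod_eq[of d R] by (metis mod_less_divisor zero_less_Suc)

lemma R_le_mult: "1 \<le> k \<Longrightarrow> R \<le> k * R"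
  using mult_le_mono1[of 1 k R] by simp

lemma spike_pattern_0: "P 0 = 0"
  using r_pos by (simp add: spike_pattern_def)

lemma stair_pattern_0: "Q 0 = 0"
  using r_pos by (simp add: stair_pattern_def)

lemma peak_eq: "1 \<le> j \<Longrightarrow> j * R - 1 = (j - 1) * R + r"
  by (cases j) auto

lemma spike_pattern_first_block: "c < r \<Longrightarrow> P c = 0"
  by (simp add: spike_pattern_def)

lemma stair_pattern_first_block: "c < r \<Longrightarrow> Q c = 0"
  by (simp add: stair_pattern_def)

lemma spike_pattern_peak:
  assumes "1 \<le> j"
  shows "P (j * R - 1) = j"
  using spike_pattern_block[OF peak_eq[OF assms]] assms by simp

lemma stair_pattern_peak:
  assumes "1 \<le> j"
  shows "Q (j * R - 1) = j"
  using stair_pattern_block[OF peak_eq[OF assms]] assms by simp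

lemma peak_less_m: "1 \<le> j \<Longrightarrow> j \<le> s \<Longrightarrow> j * R - 1 < m"
  using mult_le_mono1[of j s R] R_le_mult[of j] by linarith

lemma r_less_m: "r < m"
  using peak_less_m[of 1] s_ge_2 by simp

lemma block_less_m: "K < s \<Longrightarrow> c < R \<Longrightarrow> K * R + c < m"
  using mult_le_mono1[of "Suc K" s R] by simp

lemma spike_pattern_at_peak: "a mod R = r \<Longrightarrow> P a = a div R + 1"
  by (simp add: spike_pattern_def)

lemma stair_pattern_at_peak: "a mod R = r \<Longrightarrow> Q a = a div R + 1"
  by (simp add: stair_pattern_def)

lemma spike_pattern_off_peak: "a mod R \<noteq> r \<Longrightarrow> P a = 0"
  by (simp add: spike_pattern_def)

lemma stair_pattern_Suc_off_peak: "Suc a mod R \<noteq> r \<Longrightarrow> Q (Suc a) = Q a"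
proof -
  assume "Suc a mod R \<noteq> r"
  obtain K t where a: "a = K * R + t" "t < R"
    by (rule block_decomposition)
  show ?thesis
  proof (cases "t = r")
    case True
    then have "Suc a = Suc K * R + 0"
      using a by simp
    from stair_pattern_block[OF this] stair_pattern_block[OF a] show ?thesis
      using True r_pos by simp
  next
    case False
    then have "Suc a = K * R + Suc t" "Suc t < R"
      using a by simp_all
    from stair_pattern_block[OF this] stair_pattern_block[OF a] show ?thesis
      using False \<open>Suc a mod R \<noteq> r\<close> \<open>Suc a = K * R + Suc t\<close> \<open>Suc t < R\<close>
      by simp
  qed
qed

lemma spike_pattern_le: "a < m \<Longrightarrow> P a \<le> s"
  using less_mult_imp_div_less[of a s R] by (simp add: spike_pattern_def)

lemma stair_pattern_le: "a < m \<Longrightarrow> Q a \<le> s"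
  using less_mult_imp_div_less[of a s R] by (simp add: stair_pattern_def)

lemma spike_pattern_image: "P ` {..<m} = {..<Suc s}"
proof (rule image_lessThan_eq_if_onto)
  show "\<exists>a<m. P a = j" if "1 \<le> j" "j \<le> s" for j
    using spike_pattern_peak[OF that(1)] peak_less_m[OF that] by blast
qed (use spike_pattern_le spike_pattern_0 s_ge_2 in auto)

lemma stair_pattern_image: "Q ` {..<m} = {..<Suc s}"
proof (rule image_lessThan_eq_if_onto)
  show "\<exists>a<m. Q a = j" if "1 \<le> j" "j \<le> s" for j
    using stair_pattern_peak[OF that(1)] peak_less_m[OF that] by blast
qed (use stair_pattern_le stair_pattern_0 s_ge_2 in auto)

section \<open>Overlapping occurrences\<close>

lemma overlap_block_offset:
  assumes occ: "occurs_at p m e i" "occurs_at p m e (i + (K * R + t))" and "K < s" "t < r"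
    and flat: "\<And>c. c < r \<Longrightarrow> p c = p 0" and "p (K * R + t) < p (K * R + r)"
  shows "t = 0"
proof (rule ccontr)
  assume "t \<noteq> 0"
  then have "K * R + t + (r - t) = K * R + r" "r - t < r"
    using \<open>t < r\<close> by simp_all
  moreover have "K * R + r < m"
    using block_less_m[OF \<open>K < s\<close>] by simp
  ultimately have "K * R + t + 0 < m" "K * R + t + (r - t) < m"
    by simp_all
  from occurs_at_overlap[OF occ this] have "p (K * R + t) < p (K * R + r) \<longleftrightarrow> p 0 < p (r - t)"
    using \<open>K * R + t + (r - t) = K * R + r\<close> by simp
  then show False
    using assms(6) flat[OF \<open>r - t < r\<close>] by simp
qed

lemma spike_overlap_dvd:
  assumes occ: "occurs_at P m e i" "occurs_at P m e (i + d)" and "d < m - 1"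
  shows "R dvd d"
proof -
  obtain K t where d: "d = K * R + t" and "t < R"
    by (rule block_decomposition)
  have "K * R < s * R"
    using d \<open>d < m - 1\<close> by linarith
  then have "K < s"
    by simp
  show ?thesis
  proof (cases "t = r")
    case True
    have "d + 1 = (K + 1) * R + 0"
      using d True by simp
    from spike_pattern_block[OF this] have "P (d + 1) = 0"
      using r_pos by simp
    moreover have "P (d + 0) = K + 1"
      using spike_pattern_block[OF d \<open>t < R\<close>] True by simp
    moreover have "d + 1 < m" "d + 0 < m"
      using \<open>d < m - 1\<close> by linarith+
    ultimately have "P 1 < P 0"
      using occurs_at_overlap[OF occ, of 1 0] by simp
    then show ?thesis
      using spike_pattern_0 by simp
  next
    case False
    with \<open>t < R\<close> have "t < r"
      by simp
    have "t = 0"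
    proof (rule overlap_block_offset[OF occ(1)])
      show "occurs_at P m e (i + (K * R + t))"
        using occ(2) d by simp
      show "P (K * R + t) < P (K * R + r)"
        using spike_pattern_block[OF refl] \<open>t < r\<close> by simp
    qed (use \<open>K < s\<close> \<open>t < r\<close> spike_pattern_first_block spike_pattern_0 in auto)
    then show ?thesis
      using d by simp
  qed
qed

lemma stair_overlap_dvd:
  assumes occ: "occurs_at Q m e i" "occurs_at Q m e (i + d)" and "d < m - 1"
  shows "R dvd d"
proof -
  obtain K t where d: "d = K * R + t" and "t < R"
    by (rule block_decomposition)
  have "K * R < s * R"
    using d \<open>d < m - 1\<close> by linarith
  then have "K < s"
    by simp
  show ?thesis
  proof (cases "t = r")
    case True
    have "K * R + R < s * R"
      using d True \<open>d < m - 1\<close> by linarith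
    then have "Suc K < s"
      by (metis add.commute mult_Suc mult_less_cancel2)
    have "d + r = Suc K * R + (r - 1)"
      using d True r_pos by simp
    from stair_pattern_block[OF this] have "Q (d + r) = Suc K"
      using r_pos by simp
    moreover have "Suc K * R + (r - 1) < m"
      by (rule block_less_m[OF \<open>Suc K < s\<close>]) simp
    then have "d + r < m"
      using \<open>d + r = Suc K * R + (r - 1)\<close> by linarith
    moreover have "Q (d + 0) = Suc K"
      using stair_pattern_block[OF d \<open>t < R\<close>] True by simp
    moreover have "d + 0 < m"
      using \<open>d < m - 1\<close> by linarith
    ultimately have "\<not> Q 0 < Q r"
      using occurs_at_overlap[OF occ, of 0 r] by simp
    then show ?thesis
      using stair_pattern_0 stair_pattern_peak[of 1] by simp
  next
    case False
    with \<open>t < R\<close> have "t < r"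
      by simp
    have "t = 0"
    proof (rule overlap_block_offset[OF occ(1)])
      show "occurs_at Q m e (i + (K * R + t))"
        using occ(2) d by simp
      show "Q (K * R + t) < Q (K * R + r)"
        using stair_pattern_block[OF refl] \<open>t < r\<close> by simp
    qed (use \<open>K < s\<close> \<open>t < r\<close> stair_pattern_first_block stair_pattern_0 in auto)
    then show ?thesis
      using d by simp
  qed
qed

definition aligned :: "nat set \<Rightarrow> bool" where
  "aligned T \<longleftrightarrow> (\<forall>i\<in>T. \<forall>j\<in>T. i < j \<and> j < i + m - 1 \<longrightarrow> R dvd j - i)"

lemma aligned_if_occurrences:
  assumes occ: "\<And>i. i \<in> T \<Longrightarrow> occurs_at p m e i"
    and overlap_dvd: "\<And>i d. occurs_at p m e i \<Longrightarrow> occurs_at p m e (i + d) \<Longrightarrow> d < m - 1 \<Longrightarrow> R dvd d"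
  shows "aligned T"
  unfolding aligned_def
proof (intro ballI impI)
  fix i j assume "i \<in> T" "j \<in> T" "i < j \<and> j < i + m - 1"
  then have "i + (j - i) = j" "j - i < m - 1"
    by linarith+
  then show "R dvd j - i"
    using overlap_dvd[OF occ[OF \<open>i \<in> T\<close>], of "j - i"] occ[OF \<open>j \<in> T\<close>] by simp
qed

section \<open>Positions determined by earlier entries\<close>

definition dependent_positions :: "nat set \<Rightarrow> nat set" where
  "dependent_positions T = {i + q | i q. i \<in> T \<and> R \<le> q \<and> q < m \<and> q mod R \<noteq> r}"

lemma dependent_positionsI:
  "i \<in> T \<Longrightarrow> R \<le> q \<Longrightarrow> q < m \<Longrightarrow> q mod R \<noteq> r \<Longrightarrow> i + q \<in> dependent_positions T"
  unfolding dependent_positions_def by blast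

lemma dependent_positionsE:
  assumes "p \<in> dependent_positions T"
  obtains i q where "i \<in> T" "p = i + q" "R \<le> q" "q < m" "q mod R \<noteq> r"
  using assms unfolding dependent_positions_def by blast

lemma last_position_is_peak: "(m - 1) mod R = r"
proof -
  have "m - 1 = (s - 1) * R + r"
    using peak_eq[of s] s_ge_2 by simp
  then show ?thesis
    by simp
qed

lemma dependent_positions_ge: "p \<in> dependent_positions T \<Longrightarrow> R \<le> p"
  by (auto elim: dependent_positionsE)

lemma spike_dependent_repeats:
  assumes occ: "\<And>i. i \<in> T \<Longrightarrow> occurs_at P m e i" and "p \<in> dependent_positions T"
  shows "e p = e (p - R)"
proof -
  obtain i q where q: "i \<in> T" "p = i + q" "R \<le> q" "q < m" "q mod R \<noteq> r"
    using assms(2) by (rule dependent_positionsE)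
  have "(q - R) mod R \<noteq> r"
    using q(3,5) by (simp add: le_mod_geq)
  then have "P q = P (q - R)"
    using q(5) by (simp add: spike_pattern_off_peak)
  moreover have "q - R < m"
    using q(4) by simp
  ultimately have "e (i + q) = e (i + (q - R))"
    using occurs_at_eq[OF occ[OF q(1)] q(4)] by blast
  then show ?thesis
    using q(2,3) by simp
qed

lemma stair_dependent_repeats:
  assumes occ: "\<And>i. i \<in> T \<Longrightarrow> occurs_at Q m e i" and "p \<in> dependent_positions T"
  shows "e p = e (p - 1)"
proof -
  obtain i q where q: "i \<in> T" "p = i + q" "R \<le> q" "q < m" "q mod R \<noteq> r"
    using assms(2) by (rule dependent_positionsE)
  then have "Suc (q - 1) = q"
    by simp
  then have "Q q = Q (q - 1)"
    using stair_pattern_Suc_off_peak[of "q - 1"] q(5) by simp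
  moreover have "q - 1 < m"
    using q(4) by simp
  ultimately have "e (i + q) = e (i + (q - 1))"
    using occurs_at_eq[OF occ[OF q(1)] q(4)] by blast
  then show ?thesis
    using q(2,3) by simp
qed

context
  fixes T assumes aligned: "aligned T"
begin

lemma aligned_dvd: "i \<in> T \<Longrightarrow> j \<in> T \<Longrightarrow> i < j \<Longrightarrow> j < i + m - 1 \<Longrightarrow> R dvd j - i"
  using aligned unfolding aligned_def by blast

lemma peak_not_dependent:
  assumes "i \<in> T" "a < m" "a mod R = r"
  shows "i + a \<notin> dependent_positions T"
proof
  assume "i + a \<in> dependent_positions T"
  then obtain i' q where q: "i' \<in> T" "i + a = i' + q" "R \<le> q" "q < m" "q mod R \<noteq> r"
    by (rule dependent_positionsE)
  consider "i' = i" | "i' < i" | "i < i'"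
    by linarith
  then show False
  proof cases
    case 1
    then show False
      using q assms by simp
  next
    case 2
    then have "i - i' < m - 1"
      using q assms(3) r_pos mod_less_eq_dividend[of a R] by linarith
    then have "R dvd i - i'"
      using aligned_dvd[OF q(1) assms(1) 2] by linarith
    moreover have "q = (i - i') + a"
      using q(2) 2 by linarith
    ultimately show False
      using q(5) assms(3) by (simp add: mod_add_dvd_left)
  next
    case 3
    then have "i' - i < m - 1"
      using q assms(2) by linarith
    then have "R dvd i' - i"
      using aligned_dvd[OF assms(1) q(1) 3] by linarith
    moreover have "a = (i' - i) + q"
      using q(2) 3 by linarith
    ultimately show False
      using q(5) assms(3) by (simp add: mod_add_dvd_left)
  qed
qed

lemma dependent_occurrence_start:
  assumes "i \<in> T" "i \<in> dependent_positions T"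
  obtains i' k where "i' \<in> T" "i = i' + k * R" "1 \<le> k" "k < s"
proof -
  obtain i' q where q: "i' \<in> T" "i = i' + q" "R \<le> q" "q < m" "q mod R \<noteq> r"
    using assms(2) by (rule dependent_positionsE)
  have "q \<noteq> m - 1"
    using q(5) last_position_is_peak by auto
  then have "R dvd q"
    using aligned_dvd[OF q(1) assms(1)] q by simp
  then obtain k where "q = k * R"
    by (metis dvd_def mult.commute)
  moreover from this have "k \<noteq> 0"
    using q(3) by (metis mult_0 not_less_eq_eq zero_le)
  moreover from \<open>q = k * R\<close> have "k < s"
    using q(4) by simp
  ultimately show ?thesis
    using that q by (simp add: Suc_le_eq)
qed

lemma dependent_shift_iff:
  assumes "i \<in> T" "a < r"
  shows "i + a \<in> dependent_positions T \<longleftrightarrow> i \<in> dependent_positions T"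
proof
  assume "i \<in> dependent_positions T"
  then obtain i' k where k: "i' \<in> T" "i = i' + k * R" "1 \<le> k" "k < s"
    by (rule dependent_occurrence_start[OF assms(1)])
  have "i' + (k * R + a) \<in> dependent_positions T"
  proof (rule dependent_positionsI[OF k(1)])
    show "R \<le> k * R + a"
      using k(3) by (simp add: trans_le_add1)
    show "k * R + a < m"
      using block_less_m[OF k(4)] assms(2) by simp
    show "(k * R + a) mod R \<noteq> r"
      using assms(2) by simp
  qed
  then show "i + a \<in> dependent_positions T"
    using k(2) by (simp add: add.assoc)
next
  assume "i + a \<in> dependent_positions T"
  then obtain i' q where q: "i' \<in> T" "i + a = i' + q" "R \<le> q" "q < m" "q mod R \<noteq> r"
    by (rule dependent_positionsE)
  consider "i' \<le> i" | "i < i'"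
    by linarith
  then show "i \<in> dependent_positions T"
  proof cases
    case 1
    have "i' < i"
      using 1 q(2,3) assms(2) by linarith
    have "i - i' \<noteq> m - 1"
    proof
      assume "i - i' = m - 1"
      then have "a = 0" "q = m - 1"
        using q(2,4) \<open>i' < i\<close> by linarith+
      then show False
        using q(5) last_position_is_peak by simp
    qed
    then have "R dvd i - i'"
      using aligned_dvd[OF q(1) assms(1) \<open>i' < i\<close>] q(2,4) by linarith
    then have "R \<le> i - i'" "(i - i') mod R \<noteq> r"
      using \<open>i' < i\<close> r_pos by (auto simp: dvd_imp_le)
    then have "i' + (i - i') \<in> dependent_positions T"
      using q(2,4) by (intro dependent_positionsI[OF q(1)]) linarith+
    then show ?thesis
      using \<open>i' < i\<close> by simp
  next
    case 2
    then have "R dvd i' - i"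
      using aligned_dvd[OF assms(1) q(1)] q(2,3) assms(2) r_less_m by linarith
    moreover have "0 < i' - i" "i' - i < R"
      using 2 q(2,3) assms(2) by linarith+
    ultimately show ?thesis
      by (simp add: nat_dvd_not_less)
  qed
qed

lemma free_offset_in_first_block:
  assumes "i \<in> T" "a < m" "a mod R \<noteq> r" "i + a \<notin> dependent_positions T"
  shows "a < r" "i \<notin> dependent_positions T"
proof -
  have "\<not> R \<le> a"
    using dependent_positionsI[OF assms(1) _ assms(2,3)] assms(4) by blast
  then show "a < r"
    using assms(3) by simp
  then show "i \<notin> dependent_positions T"
    using dependent_shift_iff[OF assms(1)] assms(4) by blast
qed

end

section \<open>Transforming occurrences\<close>

(* The value of an occurrence at i on pattern letter j, where v is its value on letter 0:
   letter j > 0 first appears at the j-th peak. *)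
definition levels :: "nat \<Rightarrow> (nat \<Rightarrow> nat) \<Rightarrow> nat \<Rightarrow> nat \<Rightarrow> nat" where
  "levels v e i j = (if j = 0 then v else e (i + (j * R - 1)))"

lemma levels_at_peak:
  assumes "a mod R = r"
  shows "levels v e i (a div R + 1) = e (i + a)"
proof -
  have "(a div R + 1) * R - 1 = a"
    by (rule peak_position[OF assms])
  then show ?thesis
    by (simp add: levels_def)
qed

lemma levels_strict_mono:
  assumes occ: "occurs_at p m e i" and peaks: "\<And>j. 1 \<le> j \<Longrightarrow> p (j * R - 1) = j"
    and "v < e (i + r)"
  shows "strict_mono_on {..s} (levels v e i)"
proof (rule strict_mono_onI)
  fix x y assume "x \<in> {..s}" "y \<in> {..s}" "x < y"
  then have "1 \<le> y" "y * R - 1 < m"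
    using peak_less_m by auto
  show "levels v e i x < levels v e i y"
  proof (cases "x = 0")
    case True
    have "e (i + (1 * R - 1)) \<le> e (i + (y * R - 1))"
      using occurs_at_le[OF occ peak_less_m[of 1] \<open>y * R - 1 < m\<close>] peaks[of 1] peaks[OF \<open>1 \<le> y\<close>]
        \<open>1 \<le> y\<close> s_ge_2 by simp
    then show ?thesis
      using True \<open>1 \<le> y\<close> \<open>v < e (i + r)\<close> by (simp add: levels_def)
  next
    case False
    then have "e (i + (x * R - 1)) < e (i + (y * R - 1))"
      using occurs_at_less[OF occ peak_less_m \<open>y * R - 1 < m\<close>] peaks[of x] peaks[OF \<open>1 \<le> y\<close>]
        \<open>x < y\<close> \<open>x \<in> {..s}\<close> by simp
    then show ?thesis
      using False \<open>1 \<le> y\<close> by (simp add: levels_def)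
  qed
qed

context
  fixes T assumes aligned: "aligned T"
begin

context
  fixes e assumes spike_occ: "\<And>i. i \<in> T \<Longrightarrow> occurs_at P m e i"
begin

abbreviation "f \<equiv> copy_back 1 (dependent_positions T) e"

lemma spike_copy_below_first_peak:
  assumes i: "i \<in> T"
  shows "f i < e (i + r)"
proof (cases "i \<in> dependent_positions T")
  case False
  then have "f i = e (i + 0)"
    by (simp add: copy_back_notin)
  also have "\<dots> < e (i + r)"
    using occurs_at_less[OF spike_occ[OF i] _ r_less_m, of 0] spike_pattern_0 spike_pattern_peak[of 1]
      s_ge_2
    by simp
  finally show ?thesis .
next
  case True
  obtain i' k where k: "i' \<in> T" "i = i' + k * R" "1 \<le> k" "k < s"
    by (rule dependent_occurrence_start[OF aligned i True])
  have "(k * R - 1) mod R = r"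
    using peak_eq[OF k(3)] by simp
  then have "i' + (k * R - 1) \<notin> dependent_positions T"
    using peak_not_dependent[OF aligned k(1) peak_less_m] k by simp
  have "i - 1 = i' + (k * R - 1)" "i' + ((k + 1) * R - 1) = i + r"
    using k by (simp_all add: peak_eq)
  have "R \<le> i"
    using k(2) R_le_mult[OF k(3)] by linarith
  then have "f i = f (i - 1)"
    using True by (simp add: copy_back_in)
  also have "\<dots> = e (i' + (k * R - 1))"
    using \<open>i - 1 = i' + (k * R - 1)\<close> \<open>i' + (k * R - 1) \<notin> dependent_positions T\<close>
    by (simp add: copy_back_notin)
  also have "\<dots> < e (i' + ((k + 1) * R - 1))"
    using occurs_at_less[OF spike_occ[OF k(1)] peak_less_m[of k] peak_less_m[of "k + 1"]]
      spike_pattern_peak[of k] spike_pattern_peak[of "k + 1"] k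
    by simp
  also have "\<dots> = e (i + r)"
    by (simp only: \<open>i' + ((k + 1) * R - 1) = i + r\<close>)
  finally show ?thesis .
qed

lemma spike_copy_levels:
  assumes i: "i \<in> T"
  shows "a < m \<Longrightarrow> f (i + a) = levels (f i) e i (Q a)"
proof (induction a)
  case 0
  then show ?case
    by (simp add: levels_def stair_pattern_0)
next
  case (Suc a)
  consider (peak) "Suc a mod R = r"
    | (dependent) "Suc a mod R \<noteq> r" "i + Suc a \<in> dependent_positions T"
    | (free) "Suc a mod R \<noteq> r" "i + Suc a \<notin> dependent_positions T"
    by blast
  then show ?case
  proof cases
    case peak
    then have "f (i + Suc a) = e (i + Suc a)"
      using peak_not_dependent[OF aligned i Suc.prems] by (simp add: copy_back_notin)
    then show ?thesis
      using levels_at_peak[OF peak] stair_pattern_at_peak[OF peak] by simp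
  next
    case dependent
    then have "f (i + Suc a) = f (i + a)"
      by (simp add: copy_back_in)
    then show ?thesis
      using Suc stair_pattern_Suc_off_peak[OF dependent(1)] by simp
  next
    case free
    note first_block = free_offset_in_first_block[OF aligned i Suc.prems free]
    have "f (i + Suc a) = e (i + Suc a)"
      using free(2) by (simp add: copy_back_notin)
    also have "\<dots> = e (i + 0)"
      using occurs_at_eq[OF spike_occ[OF i] Suc.prems, of 0] spike_pattern_first_block[OF first_block(1)]
        spike_pattern_0 s_ge_2
      by simp
    also have "\<dots> = f i"
      using first_block(2) by (simp add: copy_back_notin)
    finally show ?thesis
      using stair_pattern_first_block[OF first_block(1)] by (simp add: levels_def)
  qed
qed

lemma copy_back_spike_to_stair: "i \<in> T \<Longrightarrow> occurs_at Q m f i"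
  using spike_copy_levels spike_copy_below_first_peak stair_pattern_le
    levels_strict_mono[OF spike_occ spike_pattern_peak]
  by (intro occurs_at_if_levels) auto

end

context
  fixes e assumes stair_occ: "\<And>i. i \<in> T \<Longrightarrow> occurs_at Q m e i"
begin

abbreviation "g \<equiv> copy_back R (dependent_positions T) e"

definition flat_from :: "nat \<Rightarrow> bool" where
  "flat_from i \<longleftrightarrow> (\<forall>a<m. a mod R \<noteq> r \<longrightarrow> g (i + a) = g i)"

lemma stair_copy_from_start:
  assumes k: "i' \<in> T" "i = i' + k * R" "1 \<le> k" "k < s" and "b < r" "i + b \<in> dependent_positions T"
    and "flat_from i'"
  shows "g (i + b) = g i'"
proof -
  have "R \<le> i + b"
    using k(2) R_le_mult[OF k(3)] by linarith
  then have "g (i + b) = g (i + b - R)"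
    using assms(6) by (simp add: copy_back_in)
  also have "i + b - R = i' + ((k - 1) * R + b)"
    using k(2,3) by (cases k) simp_all
  also have "g (i' + ((k - 1) * R + b)) = g i'"
    using \<open>flat_from i'\<close> block_less_m[of "k - 1" b] k(4) \<open>b < r\<close>
    unfolding flat_from_def by simp
  finally show ?thesis .
qed

lemma stair_copy_below_first_peak:
  assumes i: "i \<in> T" and earlier: "\<And>i'. i' \<in> T \<Longrightarrow> i' < i \<Longrightarrow> g i' < e (i' + r) \<and> flat_from i'"
  shows "g i < e (i + r)"
proof (cases "i \<in> dependent_positions T")
  case False
  then have "g i = e (i + 0)"
    by (simp add: copy_back_notin)
  also have "\<dots> < e (i + r)"
    using occurs_at_less[OF stair_occ[OF i] _ r_less_m, of 0] stair_pattern_0 stair_pattern_peak[of 1]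
      s_ge_2
    by simp
  finally show ?thesis .
next
  case True
  obtain i' k where k: "i' \<in> T" "i = i' + k * R" "1 \<le> k" "k < s"
    by (rule dependent_occurrence_start[OF aligned i True])
  have "i' < i"
    using k(2) R_le_mult[OF k(3)] by linarith
  have "g i = g i'"
    using stair_copy_from_start[OF k, of 0] earlier[OF k(1) \<open>i' < i\<close>] True r_pos by simp
  also have "\<dots> < e (i' + r)"
    using earlier[OF k(1) \<open>i' < i\<close>] by blast
  also have "\<dots> \<le> e (i' + ((k + 1) * R - 1))"
    using occurs_at_le[OF stair_occ[OF k(1)] r_less_m peak_less_m[of "k + 1"]] stair_pattern_peak[of 1]
      stair_pattern_peak[of "k + 1"] k(4)
    by simp
  also have "i' + ((k + 1) * R - 1) = i + r"
    using k by (simp add: peak_eq)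
  finally show ?thesis .
qed

lemma stair_copy_first_block:
  assumes i: "i \<in> T" and earlier: "\<And>i'. i' \<in> T \<Longrightarrow> i' < i \<Longrightarrow> flat_from i'" and "a < r"
  shows "g (i + a) = g i"
proof (cases "i + a \<in> dependent_positions T")
  case True
  then have "i \<in> dependent_positions T"
    using dependent_shift_iff[OF aligned i \<open>a < r\<close>] by blast
  then obtain i' k where k: "i' \<in> T" "i = i' + k * R" "1 \<le> k" "k < s"
    by (rule dependent_occurrence_start[OF aligned i])
  have "i' < i"
    using k(2) R_le_mult[OF k(3)] by linarith
  then show ?thesis
    using stair_copy_from_start[OF k \<open>a < r\<close> True] stair_copy_from_start[OF k, of 0]
      earlier[OF k(1)] \<open>i \<in> dependent_positions T\<close> r_pos
    by simp
next
  case False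
  then have "i \<notin> dependent_positions T"
    using dependent_shift_iff[OF aligned i \<open>a < r\<close>] by blast
  have "g (i + a) = e (i + a)"
    using False by (simp add: copy_back_notin)
  also have "\<dots> = e (i + 0)"
    using occurs_at_eq[OF stair_occ[OF i], of a 0] \<open>a < r\<close> r_less_m
      stair_pattern_first_block stair_pattern_0 s_ge_2
    by simp
  also have "\<dots> = g i"
    using \<open>i \<notin> dependent_positions T\<close> by (simp add: copy_back_notin)
  finally show ?thesis .
qed

lemma stair_copy_flat:
  assumes i: "i \<in> T" and earlier: "\<And>i'. i' \<in> T \<Longrightarrow> i' < i \<Longrightarrow> flat_from i'"
  shows "flat_from i"
  unfolding flat_from_def
proof (intro allI impI)
  fix a assume "a < m" "a mod R \<noteq> r"
  then show "g (i + a) = g i"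
  proof (induction a rule: less_induct)
    case (less a)
    show ?case
    proof (cases "R \<le> a")
      case True
      have "(a - R) mod R \<noteq> r"
        using less.prems le_mod_geq[OF True] by argo
      moreover have "a - R < a" "a - R < m"
        using less.prems True by auto
      ultimately have "g (i + (a - R)) = g i"
        using less.IH by blast
      moreover have "i + a \<in> dependent_positions T"
        using dependent_positionsI[OF i True less.prems] .
      ultimately show ?thesis
        using True by (simp add: copy_back_in)
    next
      case False
      then have "a < r"
        using less.prems(2) by simp
      then show ?thesis
        using stair_copy_first_block[OF i earlier] by blast
    qed
  qed
qed

lemma stair_copy_window: "i \<in> T \<Longrightarrow> g i < e (i + r) \<and> flat_from i"
proof (induction i rule: less_induct)
  case (less i)
  then show ?case
    using stair_copy_below_first_peak stair_copy_flat by blast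
qed

lemma copy_back_stair_to_spike:
  assumes i: "i \<in> T"
  shows "occurs_at P m g i"
proof -
  have "g (i + a) = levels (g i) e i (P a)" if "a < m" for a
  proof (cases "a mod R = r")
    case True
    then have "g (i + a) = e (i + a)"
      using peak_not_dependent[OF aligned i that] by (simp add: copy_back_notin)
    then show ?thesis
      using levels_at_peak[OF True] spike_pattern_at_peak[OF True] by simp
  next
    case False
    then show ?thesis
      using stair_copy_window[OF i] that spike_pattern_off_peak
      by (simp add: flat_from_def levels_def)
  qed
  then show ?thesis
    using spike_pattern_le levels_strict_mono[OF stair_occ[OF i] stair_pattern_peak]
      stair_copy_window[OF i]
    by (intro occurs_at_if_levels) auto
qed

end

end

lemma card_spike_class_le_stair_class:
  "card (occurrence_class P m n T) \<le> card (occurrence_class Q m n T)"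
proof (rule card_le_card_if_copy_back_maps[where d = 1 and d' = R and M = "dependent_positions T"])
  show "finite (occurrence_class Q m n T)"
    using finite_inv_seqs by (rule finite_subset[rotated]) (auto simp: occurrence_class_def)
  show "occurrence_class P m n T \<subseteq> inv_seqs n"
    by (auto simp: occurrence_class_def)
  fix x assume x: "x \<in> occurrence_class P m n T"
  then have occ: "\<And>i. i \<in> T \<Longrightarrow> occurs_at P m ((!) x) i"
    by (simp add: occurrence_class_def)
  show "x ! q = x ! (q - R)" if "q \<in> dependent_positions T" for q
    by (rule spike_dependent_repeats[OF occ that])
  show "map (copy_back 1 (dependent_positions T) ((!) x)) [0..<n] \<in> occurrence_class Q m n T"
    using x copy_back_spike_to_stair[OF aligned_if_occurrences[OF occ spike_overlap_dvd] occ]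
      copy_back_source
    by (intro map_in_occurrence_class) (auto simp: occurrence_class_def)
qed (auto intro: dependent_positions_ge)

lemma card_stair_class_le_spike_class:
  "card (occurrence_class Q m n T) \<le> card (occurrence_class P m n T)"
proof (rule card_le_card_if_copy_back_maps[where d = R and d' = 1 and M = "dependent_positions T"])
  show "finite (occurrence_class P m n T)"
    using finite_inv_seqs by (rule finite_subset[rotated]) (auto simp: occurrence_class_def)
  show "occurrence_class Q m n T \<subseteq> inv_seqs n"
    by (auto simp: occurrence_class_def)
  fix x assume x: "x \<in> occurrence_class Q m n T"
  then have occ: "\<And>i. i \<in> T \<Longrightarrow> occurs_at Q m ((!) x) i"
    by (simp add: occurrence_class_def)
  show "x ! q = x ! (q - 1)" if "q \<in> dependent_positions T" for q
    by (rule stair_dependent_repeats[OF occ that])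
  show "map (copy_back R (dependent_positions T) ((!) x)) [0..<n] \<in> occurrence_class P m n T"
    using x copy_back_stair_to_spike[OF aligned_if_occurrences[OF occ stair_overlap_dvd] occ]
      copy_back_source
    by (intro map_in_occurrence_class) (auto simp: occurrence_class_def)
qed (auto dest: dependent_positions_ge)

lemma card_spike_class_eq_stair_class:
  "card (occurrence_class P m n T) = card (occurrence_class Q m n T)"
  using card_spike_class_le_stair_class card_stair_class_le_spike_class by (rule le_antisym)

lemma card_Em_eq:
  assumes "T \<subseteq> {1..n}"
  shows "card {e \<in> inv_seqs n. Em (map P [0..<m]) e = T} =
         card {e \<in> inv_seqs n. Em (map Q [0..<m]) e = T}"
proof (rule card_fibres_eq_if_card_supsets_eq[OF finite_inv_seqs finite_atLeastAtMost _ _ _ assms])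
  have "0 < m"
    using s_ge_2 by simp
  then show "Em (map P [0..<m]) e \<subseteq> {1..n}" "Em (map Q [0..<m]) e \<subseteq> {1..n}"
    if "e \<in> inv_seqs n" for e
    using Em_subset[of "map P [0..<m]" e] Em_subset[of "map Q [0..<m]" e] that
    by (simp_all add: inv_seqs_def)
  fix T' :: "nat set" assume "T' \<subseteq> {1..n}"
  then have "0 \<notin> T'"
    by auto
  show "card {e \<in> inv_seqs n. T' \<subseteq> Em (map P [0..<m]) e} =
        card {e \<in> inv_seqs n. T' \<subseteq> Em (map Q [0..<m]) e}"
    unfolding Em_supset_eq_occurrence_class[OF spike_pattern_image \<open>0 \<notin> T'\<close>]
      Em_supset_eq_occurrence_class[OF stair_pattern_image \<open>0 \<notin> T'\<close>]
    by (rule card_spike_class_eq_stair_class)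
qed

end

theorem mainTheorem6:
  fixes r s :: nat
  assumes "r \<ge> 1" and "s \<ge> 2"
  shows "super_strongly_wilf_equiv
           (concat (map (\<lambda>i. replicate r 0 @ [i]) [1..<s+1]))
           (concat (map (\<lambda>i. replicate r (i - 1) @ [i]) [1..<s+1]))"
proof -
  interpret spike_stair r s
    using assms by unfold_locales
  show ?thesis
    unfolding super_strongly_wilf_equiv_def spike_pattern_list stair_pattern_list
    using card_Em_eq by blast
qed

end
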